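(* Let $(X,d)$ be a finite ultrametric space. Then for every $\varepsilon>0$ there exists $(Y,\rho)\in\mathfrak U$ such that $|X|=|Y|$ and $d_{GH}(\operatorname{is}(X),\operatorname{is}(Y))<\varepsilon$.
   Context: $\operatorname{Sp}(X)=\{d(x,y):x\neq y\}$; $\mathfrak U$ is the class of finite ultrametric spaces $X$ with $|\operatorname{Sp}(X)|=|X|-1$. $\operatorname{is}(X)$ denotes the isometry type of $X$. For bounded metric spaces $X,Y$ and $\varepsilon>0$, $d_{GH}(\operatorname{is}(X),\operatorname{is}(Y))<\varepsilon$ iff there is a metric space $(Z,d_Z)$ with subspaces $X',Y'$ isometric to $X,Y$ such that each point of $X'$ lies at $d_Z$-distance $<\varepsilon$ from some point of $Y'$ and each point of $Y'$ lies at distance $<\varepsilon$ from some point of $X'$. *)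

theory Defs
  imports Main "HOL.Real"
begin

text \<open>A metric space is represented by a carrier set together with a real-valued
distance function (only its values on the carrier matter).\<close>

definition metric_on :: "'a set \<Rightarrow> ('a \<Rightarrow> 'a \<Rightarrow> real) \<Rightarrow> bool" where
  "metric_on S d \<longleftrightarrow>
     (\<forall>x\<in>S. \<forall>y\<in>S. d x y \<ge> 0 \<and> (d x y = 0 \<longleftrightarrow> x = y) \<and> d x y = d y x) \<and>
     (\<forall>x\<in>S. \<forall>y\<in>S. \<forall>z\<in>S. d x z \<le> d x y + d y z)"

definition ultrametric_on :: "'a set \<Rightarrow> ('a \<Rightarrow> 'a \<Rightarrow> real) \<Rightarrow> bool" where
  "ultrametric_on S d \<longleftrightarrow> metric_on S d \<and>
     (\<forall>x\<in>S. \<forall>y\<in>S. \<forall>z\<in>S. d x z \<le> max (d x y) (d y z))"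

definition Sp :: "'a set \<Rightarrow> ('a \<Rightarrow> 'a \<Rightarrow> real) \<Rightarrow> real set" where
  "Sp S d = {d x y | x y. x \<in> S \<and> y \<in> S \<and> x \<noteq> y}"

definition in_U :: "'a set \<Rightarrow> ('a \<Rightarrow> 'a \<Rightarrow> real) \<Rightarrow> bool" where
  "in_U S d \<longleftrightarrow> finite S \<and> ultrametric_on S d \<and> card (Sp S d) = card S - 1"

definition isometric_embedding ::
  "('a \<Rightarrow> 'c) \<Rightarrow> 'a set \<Rightarrow> ('a \<Rightarrow> 'a \<Rightarrow> real) \<Rightarrow> 'c set \<Rightarrow> ('c \<Rightarrow> 'c \<Rightarrow> real) \<Rightarrow> bool" where
  "isometric_embedding f S d T e \<longleftrightarrow>
     f ` S \<subseteq> T \<and> (\<forall>x\<in>S. \<forall>y\<in>S. e (f x) (f y) = d x y)"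

text \<open>d_GH(is(X), is(Y)) < eps, via the characterization in the paper: there is a metric
space Z containing isometric copies X' = f`X and Y' = g`Y, each point of one copy
being at distance < eps from some point of the other. The ambient space Z may be taken
(without loss of generality, by restricting to X' \<union> Y') with carrier in the type 'a + 'b.\<close>
definition GH_dist_less ::
  "'a set \<Rightarrow> ('a \<Rightarrow> 'a \<Rightarrow> real) \<Rightarrow> 'b set \<Rightarrow> ('b \<Rightarrow> 'b \<Rightarrow> real) \<Rightarrow> real \<Rightarrow> bool" where
  "GH_dist_less X dX Y dY eps \<longleftrightarrow>
     (\<exists>(Z :: ('a + 'b) set) dZ f g.
        metric_on Z dZ \<and>
        isometric_embedding f X dX Z dZ \<and>
        isometric_embedding g Y dY Z dZ \<and>
        (\<forall>x\<in>X. \<exists>y\<in>Y. dZ (f x) (g y) < eps) \<and>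
        (\<forall>y\<in>Y. \<exists>x\<in>X. dZ (f x) (g y) < eps))"

end

theory Submission
  imports Defs
begin

text \<open>Every finite ultrametric is approximated from above by one whose nonzero distances
are pairwise distinct, by induction on the number of points: remove one endpoint \<open>a\<close> of
a closest pair \<open>{a, b}\<close>, perturb the rest, and re-attach \<open>a\<close> as a copy of \<open>b\<close> at a
fresh distance \<open>t\<close> from \<open>b\<close>, slightly above \<open>d a b\<close> but below every other perturbed
distance from \<open>b\<close>. The ultrametric inequality makes \<open>a\<close> and \<open>b\<close> equidistant from all
other points, so this keeps the perturbation small, and \<open>t\<close> is the one new distance.
An upward perturbation \<open>\<rho>\<close> of \<open>d\<close> by at most \<open>\<epsilon>\<close> is at Gromov-Hausdorff distance
below \<open>\<epsilon>\<close>: glue two copies of the space with cross distances \<open>d x y + \<epsilon>/2\<close>.\<close>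

definition upward_perturbation ::
  "'a set \<Rightarrow> ('a \<Rightarrow> 'a \<Rightarrow> real) \<Rightarrow> ('a \<Rightarrow> 'a \<Rightarrow> real) \<Rightarrow> real \<Rightarrow> bool" where
  "upward_perturbation X d \<rho> eta \<longleftrightarrow>
     (\<forall>x\<in>X. \<forall>y\<in>X. x \<noteq> y \<longrightarrow> d x y < \<rho> x y \<and> \<rho> x y \<le> d x y + eta)"

definition attach_point :: "'a \<Rightarrow> 'a \<Rightarrow> real \<Rightarrow> ('a \<Rightarrow> 'a \<Rightarrow> real) \<Rightarrow> 'a \<Rightarrow> 'a \<Rightarrow> real" where
  "attach_point a b t p x y =
     (if x = a \<and> y = a then 0
      else if x = a then (if y = b then t else p b y)
      else if y = a then (if x = b then t else p x b)
      else p x y)"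

fun glued_dist :: "('a \<Rightarrow> 'a \<Rightarrow> real) \<Rightarrow> ('a \<Rightarrow> 'a \<Rightarrow> real) \<Rightarrow> real \<Rightarrow> 'a + 'a \<Rightarrow> 'a + 'a \<Rightarrow> real" where
  "glued_dist d \<rho> e (Inl x) (Inl y) = d x y"
| "glued_dist d \<rho> e (Inr x) (Inr y) = \<rho> x y"
| "glued_dist d \<rho> e (Inl x) (Inr y) = d x y + e"
| "glued_dist d \<rho> e (Inr y) (Inl x) = d x y + e"

lemma ultrametric_on_subset: "ultrametric_on X d \<Longrightarrow> S \<subseteq> X \<Longrightarrow> ultrametric_on S d"
  unfolding ultrametric_on_def metric_on_def by blast

lemma ultrametric_onI:
  assumes "\<forall>x\<in>S. \<forall>y\<in>S. p x y \<ge> 0 \<and> (p x y = 0 \<longleftrightarrow> x = y) \<and> p x y = p y x"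
    and "\<forall>x\<in>S. \<forall>y\<in>S. \<forall>z\<in>S. p x z \<le> max (p x y) (p y z)"
  shows "ultrametric_on S p"
  unfolding ultrametric_on_def metric_on_def
proof (intro conjI assms ballI)
  fix x y z assume "x \<in> S" "y \<in> S" "z \<in> S"
  then have "p x z \<le> max (p x y) (p y z)" "p x y \<ge> 0" "p y z \<ge> 0" using assms by auto
  then show "p x z \<le> p x y + p y z" by linarith
qed

lemma ultrametric_equidistant_of_closest:
  assumes "ultrametric_on S d" "a \<in> S" "b \<in> S" "y \<in> S"
    and "d a b \<le> d a y" "d a b \<le> d b y"
  shows "d a y = d b y"
proof -
  have "d a y \<le> max (d a b) (d b y)" "d b y \<le> max (d b a) (d a y)" "d b a = d a b"
    using assms(1-4) unfolding ultrametric_on_def metric_on_def by blast+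
  then show ?thesis using assms(5,6) by (simp add: max_def split: if_splits)
qed

lemma finite_Sp: "finite S \<Longrightarrow> finite (Sp S d)"
proof -
  assume "finite S"
  moreover have "Sp S d \<subseteq> (\<lambda>(x, y). d x y) ` (S \<times> S)" unfolding Sp_def by auto
  ultimately show ?thesis by (meson finite_SigmaI finite_imageI finite_subset)
qed

lemma Sp_empty_if_card_le_1:
  assumes "finite S" "card S \<le> 1"
  shows "Sp S d = {}"
  using assms by (auto simp: Sp_def card_le_Suc0_iff_eq)

lemma ultrametric_on_attach_point:
  assumes u: "ultrametric_on S p" and b: "b \<in> S" and a: "a \<notin> S" and t: "0 < t"
    and below: "\<forall>y\<in>S. y \<noteq> b \<longrightarrow> t < p b y"
  shows "ultrametric_on (insert a S) (attach_point a b t p)"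
proof -
  let ?\<rho> = "attach_point a b t p"
  have m: "\<forall>x\<in>S. \<forall>y\<in>S. p x y \<ge> 0 \<and> (p x y = 0 \<longleftrightarrow> x = y) \<and> p x y = p y x"
    and um: "\<And>x y z. x \<in> S \<Longrightarrow> y \<in> S \<Longrightarrow> z \<in> S \<Longrightarrow> p x z \<le> max (p x y) (p y z)"
    using u unfolding ultrametric_on_def metric_on_def by auto
  have p_refl: "p x x = 0" and p_sym: "p x y = p y x" if "x \<in> S" "y \<in> S" for x y
    using that m by auto
  have metric: "\<forall>x\<in>insert a S. \<forall>y\<in>insert a S.
      ?\<rho> x y \<ge> 0 \<and> (?\<rho> x y = 0 \<longleftrightarrow> x = y) \<and> ?\<rho> x y = ?\<rho> y x"
    using m b a t unfolding attach_point_def by auto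
  have in_S: "?\<rho> x y = p x y" if "x \<in> S" "y \<in> S" for x y
    using that a unfolding attach_point_def by auto
  have at_b: "?\<rho> a b = t" "?\<rho> b a = t"
    using a b unfolding attach_point_def by auto
  have at_other: "?\<rho> a y = p b y" "?\<rho> y a = p b y" if "y \<in> S" "y \<noteq> b" for y
    using that a b m unfolding attach_point_def by auto
  have from_a: "?\<rho> a z \<le> max (?\<rho> a y) (?\<rho> y z)" if "y \<in> S" "z \<in> S" for y z
  proof -
    consider "z = b" | "y = b" "z \<noteq> b" | "y \<noteq> b" "z \<noteq> b" by blast
    then show ?thesis
    proof cases
      case 1
      then show ?thesis using that at_b at_other below by (cases "y = b") force+
    next
      case 2
      then show ?thesis using that at_other in_S by simp
    next
      case 3
      then show ?thesis using that at_other in_S um b by simp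
    qed
  qed
  have via_a: "?\<rho> x z \<le> max (?\<rho> x a) (?\<rho> a z)" if "x \<in> S" "z \<in> S" for x z
  proof -
    consider "x = b" | "z = b" | "x \<noteq> b" "z \<noteq> b" by blast
    then show ?thesis
    proof cases
      case 1
      then show ?thesis using that at_other in_S at_b p_refl t by (cases "z = b") auto
    next
      case 2
      then show ?thesis using that at_other in_S at_b p_refl p_sym t by (cases "x = b") auto
    next
      case 3
      then show ?thesis using that at_other in_S um[of x b z] b p_sym by simp
    qed
  qed
  show ?thesis
  proof (rule ultrametric_onI[OF metric], intro ballI)
    fix x y z assume xyz: "x \<in> insert a S" "y \<in> insert a S" "z \<in> insert a S"
    then have nonneg: "?\<rho> x y \<ge> 0" "?\<rho> y z \<ge> 0" and refl: "?\<rho> x x = 0" "?\<rho> y y = 0"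
      and sym: "?\<rho> x y = ?\<rho> y x" "?\<rho> y z = ?\<rho> z y" "?\<rho> x z = ?\<rho> z x"
      using metric by blast+
    show "?\<rho> x z \<le> max (?\<rho> x y) (?\<rho> y z)"
    proof (cases "x = z \<or> y = x \<or> y = z")
      case True
      then show ?thesis using nonneg refl by auto
    next
      case False
      then consider "x = a" "y \<in> S" "z \<in> S" | "z = a" "x \<in> S" "y \<in> S"
        | "y = a" "x \<in> S" "z \<in> S" | "x \<in> S" "y \<in> S" "z \<in> S"
        using xyz by blast
      then show ?thesis
      proof cases
        case 1
        then show ?thesis using from_a by blast
      next
        case 2
        then show ?thesis using from_a[of y x] sym by (simp add: max.commute)
      next
        case 3
        then show ?thesis using via_a by blast
      next
        case 4
        then show ?thesis using in_S um by simp
      qed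
    qed
  qed
qed

lemma Sp_attach_point:
  assumes b: "b \<in> S" and a: "a \<notin> S"
  shows "Sp (insert a S) (attach_point a b t p) = insert t (Sp S p)"
proof
  show "Sp (insert a S) (attach_point a b t p) \<subseteq> insert t (Sp S p)"
    using b a unfolding attach_point_def Sp_def by (auto split: if_splits)
  show "insert t (Sp S p) \<subseteq> Sp (insert a S) (attach_point a b t p)"
  proof
    fix v assume "v \<in> insert t (Sp S p)"
    then consider "v = t" | x y where "x \<in> S" "y \<in> S" "x \<noteq> y" "v = p x y"
      unfolding Sp_def by blast
    then show "v \<in> Sp (insert a S) (attach_point a b t p)"
    proof cases
      case 1
      have "attach_point a b t p a b = t" "a \<noteq> b" using a b unfolding attach_point_def by auto
      then show ?thesis using 1 b unfolding Sp_def by force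
    next
      case (2 x y)
      then have "attach_point a b t p x y = v" using a unfolding attach_point_def by auto
      then show ?thesis using 2 unfolding Sp_def by blast
    qed
  qed
qed

lemma in_U_attach_point:
  assumes "in_U S p" "b \<in> S" "a \<notin> S" "0 < t" "\<forall>y\<in>S. y \<noteq> b \<longrightarrow> t < p b y" "t \<notin> Sp S p"
  shows "in_U (insert a S) (attach_point a b t p)"
proof -
  have "finite S" "card S \<ge> 1" using assms(1,2) unfolding in_U_def
    by (auto simp: Suc_le_eq card_gt_0_iff)
  then have "card (Sp (insert a S) (attach_point a b t p)) = card (insert a S) - 1"
    using assms finite_Sp[of S p] unfolding in_U_def by (simp add: Sp_attach_point)
  then show ?thesis
    using assms ultrametric_on_attach_point unfolding in_U_def by auto
qed

lemma upward_perturbation_attach_point: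
  assumes pert: "upward_perturbation S d p eta" and a: "a \<notin> S" and b: "b \<in> S"
    and d_sym: "\<forall>x\<in>insert a S. \<forall>y\<in>insert a S. d x y = d y x"
    and p_sym: "\<forall>x\<in>S. \<forall>y\<in>S. p x y = p y x"
    and t: "d a b < t" "t \<le> d a b + eta"
    and equidistant: "\<forall>y\<in>S. y \<noteq> b \<longrightarrow> d a y = d b y"
  shows "upward_perturbation (insert a S) d (attach_point a b t p) eta"
  unfolding upward_perturbation_def
proof (intro ballI impI)
  let ?\<rho> = "attach_point a b t p"
  have from_a: "d a y < ?\<rho> a y \<and> ?\<rho> a y \<le> d a y + eta \<and> ?\<rho> y a = ?\<rho> a y \<and> d y a = d a y"
    if y: "y \<in> S" for y
  proof -
    have "d y a = d a y" using d_sym y by blast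
    moreover have "d a y < ?\<rho> a y \<and> ?\<rho> a y \<le> d a y + eta \<and> ?\<rho> y a = ?\<rho> a y"
    proof (cases "y = b")
      case True
      then show ?thesis using a b t unfolding attach_point_def by auto
    next
      case False
      then have "?\<rho> a y = p b y" "?\<rho> y a = p b y" "d a y = d b y"
        using y a b p_sym equidistant unfolding attach_point_def by auto
      moreover have "d b y < p b y \<and> p b y \<le> d b y + eta"
        using pert y b False unfolding upward_perturbation_def by auto
      ultimately show ?thesis by simp
    qed
    ultimately show ?thesis by blast
  qed
  fix x y assume "x \<in> insert a S" "y \<in> insert a S" "x \<noteq> y"
  then consider "x = a" "y \<in> S" | "y = a" "x \<in> S" | "x \<in> S" "y \<in> S" using a by blast
  then show "d x y < ?\<rho> x y \<and> ?\<rho> x y \<le> d x y + eta"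
  proof cases
    case 3
    then have "?\<rho> x y = p x y" using a unfolding attach_point_def by auto
    then show ?thesis using 3 \<open>x \<noteq> y\<close> pert unfolding upward_perturbation_def by auto
  qed (use from_a in auto)
qed

lemma exists_fresh_value_above:
  fixes r eta :: real
  assumes "finite V" "finite W" "\<forall>w\<in>W. r < w" "0 < eta"
  shows "\<exists>t. r < t \<and> t \<le> r + eta \<and> t \<notin> V \<and> (\<forall>w\<in>W. t < w)"
proof -
  define u where "u = Min (insert (r + eta) (W \<union> {v \<in> V. r < v}))"
  have u_le: "u \<le> r + eta" "\<forall>w\<in>W. u \<le> w" "\<forall>v\<in>V. r < v \<longrightarrow> u \<le> v"
    using assms(1,2) unfolding u_def by auto
  have "r < u" using assms unfolding u_def by auto
  then show ?thesis using u_le by (intro exI[of _ "(r + u) / 2"]) force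
qed

lemma exists_closest_pair:
  fixes d :: "'a \<Rightarrow> 'a \<Rightarrow> real"
  assumes "finite X" "\<not> card X \<le> 1"
  shows "\<exists>a\<in>X. \<exists>b\<in>X. a \<noteq> b \<and> (\<forall>x\<in>X. \<forall>y\<in>X. x \<noteq> y \<longrightarrow> d a b \<le> d x y)"
proof -
  have "Sp X d \<noteq> {}" using assms unfolding Sp_def by (auto simp: card_le_Suc0_iff_eq)
  then have "Min (Sp X d) \<in> Sp X d" and min_le: "\<And>v. v \<in> Sp X d \<Longrightarrow> Min (Sp X d) \<le> v"
    using finite_Sp[OF assms(1)] by auto
  then obtain a b where "a \<in> X" "b \<in> X" "a \<noteq> b" "d a b = Min (Sp X d)"
    unfolding Sp_def by auto
  moreover have "d a b \<le> d x y" if "x \<in> X" "y \<in> X" "x \<noteq> y" for x y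
    using min_le[of "d x y"] that \<open>d a b = Min (Sp X d)\<close> unfolding Sp_def by auto
  ultimately show ?thesis by blast
qed

lemma exists_in_U_upward_perturbation:
  assumes "finite X" "ultrametric_on X d" "0 < eta"
  shows "\<exists>\<rho>. in_U X \<rho> \<and> upward_perturbation X d \<rho> eta"
  using assms(1,2)
proof (induction "card X" arbitrary: X rule: less_induct)
  case less
  note fin = less.prems(1) and ultra = less.prems(2)
  show ?case
  proof (cases "card X \<le> 1")
    case True
    then have "in_U X d" "upward_perturbation X d d eta"
      using fin ultra Sp_empty_if_card_le_1[OF fin]
      by (auto simp: in_U_def upward_perturbation_def card_le_Suc0_iff_eq)
    then show ?thesis by blast
  next
    case False
    then obtain a b where ab: "a \<in> X" "b \<in> X" "a \<noteq> b"
      and closest: "\<forall>x\<in>X. \<forall>y\<in>X. x \<noteq> y \<longrightarrow> d a b \<le> d x y"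
      using exists_closest_pair[OF fin] by blast
    have d_metric: "\<forall>x\<in>X. \<forall>y\<in>X. d x y \<ge> 0 \<and> (d x y = 0 \<longleftrightarrow> x = y) \<and> d x y = d y x"
      using ultra unfolding ultrametric_on_def metric_on_def by blast
    define S where "S = X - {a}"
    have S: "finite S" "a \<notin> S" "b \<in> S" "X = insert a S" "card S < card X"
      using ab fin card_Diff1_less[OF fin ab(1)] unfolding S_def by auto
    obtain p where p: "in_U S p" "upward_perturbation S d p eta"
      using less.hyps[OF S(5) S(1) ultrametric_on_subset[OF ultra]] S_def by blast
    have p_sym: "\<forall>x\<in>S. \<forall>y\<in>S. p x y = p y x"
      using p(1) unfolding in_U_def ultrametric_on_def metric_on_def by blast
    have above: "d a b < p b y" if "y \<in> S" "y \<noteq> b" for y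
    proof -
      have "d a b \<le> d b y" using closest that S(3,4) by auto
      also have "d b y < p b y" using p(2) that S(3) unfolding upward_perturbation_def by auto
      finally show ?thesis .
    qed
    then have "\<forall>w\<in>p b ` (S - {b}). d a b < w" by blast
    from exists_fresh_value_above[OF finite_Sp[OF S(1)] finite_imageI[OF finite_Diff[OF S(1)]]
        this assms(3)]
    obtain t where t: "d a b < t" "t \<le> d a b + eta" "t \<notin> Sp S p"
      and t_below: "\<forall>w\<in>p b ` (S - {b}). t < w"
      by blast
    have "0 < d a b" using d_metric ab by fastforce
    then have "0 < t" using t(1) by linarith
    moreover have "\<forall>y\<in>S. y \<noteq> b \<longrightarrow> t < p b y" using t_below by blast
    ultimately have in_U: "in_U X (attach_point a b t p)"
      unfolding S(4) by (rule in_U_attach_point[OF p(1) S(3) S(2) _ _ t(3)])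
    have "\<forall>y\<in>S. y \<noteq> b \<longrightarrow> d a y = d b y"
    proof (intro ballI impI)
      fix y assume "y \<in> S" "y \<noteq> b"
      then have y: "y \<in> X" "a \<noteq> y" "b \<noteq> y" using S by auto
      show "d a y = d b y"
        using ultrametric_equidistant_of_closest[OF ultra ab(1,2) y(1)]
          closest[rule_format, OF ab(1) y(1) y(2)] closest[rule_format, OF ab(2) y(1) y(3)] by blast
    qed
    moreover have "\<forall>x\<in>insert a S. \<forall>y\<in>insert a S. d x y = d y x"
      using d_metric unfolding S(4) by blast
    ultimately have "upward_perturbation X d (attach_point a b t p) eta"
      unfolding S(4) using upward_perturbation_attach_point[OF p(2) S(2,3) _ p_sym t(1,2)] by blast
    with in_U show ?thesis by blast
  qed
qed

lemma metric_on_glued_dist: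
  assumes d: "metric_on X d" and \<rho>: "metric_on X \<rho>" and e: "0 < e"
    and between: "\<forall>x\<in>X. \<forall>y\<in>X. d x y \<le> \<rho> x y \<and> \<rho> x y \<le> d x y + 2 * e"
  shows "metric_on (Inl ` X \<union> Inr ` X) (glued_dist d \<rho> e)"
proof -
  have d1: "\<And>x y. x \<in> X \<Longrightarrow> y \<in> X \<Longrightarrow> d x y \<ge> 0 \<and> (d x y = 0 \<longleftrightarrow> x = y) \<and> d x y = d y x"
    and d2: "\<And>x y z. x \<in> X \<Longrightarrow> y \<in> X \<Longrightarrow> z \<in> X \<Longrightarrow> d x z \<le> d x y + d y z"
    using d unfolding metric_on_def by blast+
  have r1: "\<And>x y. x \<in> X \<Longrightarrow> y \<in> X \<Longrightarrow> \<rho> x y \<ge> 0 \<and> (\<rho> x y = 0 \<longleftrightarrow> x = y) \<and> \<rho> x y = \<rho> y x"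
    and r2: "\<And>x y z. x \<in> X \<Longrightarrow> y \<in> X \<Longrightarrow> z \<in> X \<Longrightarrow> \<rho> x z \<le> \<rho> x y + \<rho> y z"
    using \<rho> unfolding metric_on_def by blast+
  have cross_pos: "\<And>x y. x \<in> X \<Longrightarrow> y \<in> X \<Longrightarrow> d x y + e > 0" using d1 e by (meson add_nonneg_pos)
  have basic: "\<forall>u\<in>Inl ` X \<union> Inr ` X. \<forall>v\<in>Inl ` X \<union> Inr ` X. glued_dist d \<rho> e u v \<ge> 0 \<and>
      (glued_dist d \<rho> e u v = 0 \<longleftrightarrow> u = v) \<and> glued_dist d \<rho> e u v = glued_dist d \<rho> e v u"
    using d1 r1 e by (auto simp: cross_pos less_imp_neq[OF cross_pos, symmetric] less_imp_le)
  show ?thesis unfolding metric_on_def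
  proof (intro conjI basic ballI)
    fix u v w assume "u \<in> Inl ` X \<union> Inr ` X" "v \<in> Inl ` X \<union> Inr ` X" "w \<in> Inl ` X \<union> Inr ` X"
    then obtain x y z where xyz: "x \<in> X" "y \<in> X" "z \<in> X"
      "u = Inl x \<or> u = Inr x" "v = Inl y \<or> v = Inr y" "w = Inl z \<or> w = Inr z" by blast
    have "d x z \<le> d x y + d y z" "d x y \<le> d x z + d z y" "d y z \<le> d y x + d x z"
      "\<rho> x z \<le> \<rho> x y + \<rho> y z" "\<rho> x y \<le> \<rho> x z + \<rho> z y" "\<rho> y z \<le> \<rho> y x + \<rho> x z"
      using d2 r2 xyz by auto
    moreover have "d x y \<le> \<rho> x y" "d x z \<le> \<rho> x z" "d y z \<le> \<rho> y z"
      "\<rho> x y \<le> d x y + 2 * e" "\<rho> x z \<le> d x z + 2 * e" "\<rho> y z \<le> d y z + 2 * e"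
      using between xyz by auto
    moreover have "d x y = d y x" "d x z = d z x" "d y z = d z y"
      "\<rho> x y = \<rho> y x" "\<rho> x z = \<rho> z x" "\<rho> y z = \<rho> z y" "d x y \<ge> 0" "d x z \<ge> 0" "d y z \<ge> 0"
      using d1 r1 xyz by auto
    ultimately show "glued_dist d \<rho> e u w \<le> glued_dist d \<rho> e u v + glued_dist d \<rho> e v w"
      using xyz(4-6) e by (elim disjE; simp; linarith)
  qed
qed

lemma GH_dist_less_if_dominating:
  assumes "metric_on X d" "metric_on X \<rho>" "0 < eps"
    and between: "\<forall>x\<in>X. \<forall>y\<in>X. d x y \<le> \<rho> x y \<and> \<rho> x y \<le> d x y + eps"
  shows "GH_dist_less X d X \<rho> eps"
  unfolding GH_dist_less_def
proof (intro exI conjI)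
  have d_refl: "\<And>x. x \<in> X \<Longrightarrow> d x x = 0" using assms(1) unfolding metric_on_def by blast
  show "metric_on (Inl ` X \<union> Inr ` X) (glued_dist d \<rho> (eps / 2))"
    using metric_on_glued_dist[OF assms(1,2)] assms(3) between by simp
  show "isometric_embedding Inl X d (Inl ` X \<union> Inr ` X) (glued_dist d \<rho> (eps / 2))"
    "isometric_embedding Inr X \<rho> (Inl ` X \<union> Inr ` X) (glued_dist d \<rho> (eps / 2))"
    unfolding isometric_embedding_def by auto
  show "\<forall>x\<in>X. \<exists>y\<in>X. glued_dist d \<rho> (eps / 2) (Inl x) (Inr y) < eps"
    using d_refl assms(3) by (intro ballI bexI) auto
  show "\<forall>y\<in>X. \<exists>x\<in>X. glued_dist d \<rho> (eps / 2) (Inl x) (Inr y) < eps"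
    using d_refl assms(3) by (intro ballI bexI) auto
qed

theorem mainTheorem16:
  fixes X :: "'a set" and d :: "'a \<Rightarrow> 'a \<Rightarrow> real" and eps :: real
  assumes "finite X" and "ultrametric_on X d" and "eps > 0"
  shows "\<exists>(Y :: 'a set) (\<rho> :: 'a \<Rightarrow> 'a \<Rightarrow> real).
           in_U Y \<rho> \<and> card X = card Y \<and> GH_dist_less X d Y \<rho> eps"
proof -
  obtain \<rho> where \<rho>: "in_U X \<rho>" "upward_perturbation X d \<rho> eps"
    using exists_in_U_upward_perturbation[OF assms] by blast
  have d: "metric_on X d" using assms(2) unfolding ultrametric_on_def by simp
  have "metric_on X \<rho>" using \<rho>(1) unfolding in_U_def ultrametric_on_def by simp
  moreover have "\<forall>x\<in>X. \<forall>y\<in>X. d x y \<le> \<rho> x y \<and> \<rho> x y \<le> d x y + eps"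
    using \<rho>(2) d calculation assms(3) unfolding upward_perturbation_def metric_on_def
    by (metis add_0 less_eq_real_def order_refl)
  ultimately have "GH_dist_less X d X \<rho> eps"
    using GH_dist_less_if_dominating[OF d] assms(3) by blast
  then show ?thesis using \<rho>(1) by blast
qed

end
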